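(* Let $p,q\ge0$, $m=p+q$, and let $\boldsymbol x=(x_1,\dots,x_m)$, $\boldsymbol a=(a_1,\dots,a_m)$ be indeterminates. Then $$F^{p,q}(\boldsymbol x;\boldsymbol a)=(-1)^{\binom p2+\binom q2}\prod_{i=1}^m x_i^{p-1}\cdot\det V^{p,q}(\boldsymbol x+\boldsymbol x^{-1};\boldsymbol a\boldsymbol x^{q-p})=(-1)^{\binom p2+\binom q2}\det U,$$ where $\boldsymbol x+\boldsymbol x^{-1}=(x_1+x_1^{-1},\dots,x_m+x_m^{-1})$, $\boldsymbol a\boldsymbol x^{q-p}=(a_1x_1^{q-p},\dots,a_mx_m^{q-p})$, and $U$ is the $m\times m$ matrix whose $i$-th row is $$\big(x_i^{p-1},\,x_i^{p-2}(1+x_i^2),\,\dots,\,(1+x_i^2)^{p-1},\ a_ix_i^{q-1},\,a_ix_i^{q-2}(1+x_i^2),\,\dots,\,a_i(1+x_i^2)^{q-1}\big).$$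
   Context: Partitions: a partition $\lambda=(\lambda_1\ge\lambda_2\ge\cdots)$ of nonnegative integers with finitely many nonzero parts; $l(\lambda)$ is the number of nonzero parts, $|\lambda|=\sum_i\lambda_i$. In Frobenius notation $\lambda=(\alpha_1,\dots,\alpha_d\,|\,\beta_1,\dots,\beta_d)$ where $d=\#\{i:\lambda_i\ge i\}$, $\alpha_i=\lambda_i-i$, $\beta_i=\lambda'_i-i$ ($\lambda'$ the conjugate partition). For an integer $m\ge 0$, $\mathcal{P}_m$ is the set of partitions $\lambda$ with $l(\lambda)\le m$ of the form $(\alpha_1,\dots,\alpha_d\,|\,\alpha_1+1,\dots,\alpha_d+1)$ (the empty partition included; $|\lambda|$ is then even). For nonnegative integers $p,q$, vectors $\boldsymbol{x}=(x_1,\dots,x_{p+q})$, $\boldsymbol{a}=(a_1,\dots,a_{p+q})$, and partitions $\lambda,\mu$ with $l(\lambda)\le p$, $l(\mu)\le q$, let $V^{p,q}_{\lambda,\mu}(\boldsymbol{x};\boldsymbol{a})$ be the $(p+q)\times(p+q)$ matrix whose $i$-th row is $$(x_i^{\lambda_p},x_i^{\lambda_{p-1}+1},\dots,x_i^{\lambda_1+p-1},\ a_ix_i^{\mu_q},a_ix_i^{\mu_{q-1}+1},\dots,a_ix_i^{\mu_1+q-1}),$$ and $V^{p,q}(\boldsymbol x;\boldsymbol a)=V^{p,q}_{\emptyset,\emptyset}(\boldsymbol x;\boldsymbol a)$, i.e. the matrix with $i$-th row $(1,x_i,\dots,x_i^{p-1},a_i,a_ix_i,\dots,a_ix_i^{q-1})$.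 Define $$F^{p,q}(\boldsymbol{x};\boldsymbol{a})=\sum_{\lambda\in\mathcal{P}_p,\ \mu\in\mathcal{P}_q}(-1)^{(|\lambda|+|\mu|)/2}\det V^{p,q}_{\lambda,\mu}(\boldsymbol{x};\boldsymbol{a}).$$ *)

theory Defs
  imports Complex_Main "Jordan_Normal_Form.Determinant"
begin

(* Partitions are represented as functions lam :: nat => nat, 1-indexed:
   lam 1 >= lam 2 >= ... , lam 0 = 0 (unused), finitely many nonzero parts. *)
definition is_partition :: "(nat \<Rightarrow> nat) \<Rightarrow> bool" where
  "is_partition lam \<longleftrightarrow> lam 0 = 0 \<and> (\<forall>i\<ge>1. lam (Suc i) \<le> lam i)
      \<and> finite {i. lam i \<noteq> 0}"

definition part_len :: "(nat \<Rightarrow> nat) \<Rightarrow> nat" where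
  "part_len lam = card {i. 1 \<le> i \<and> lam i \<noteq> 0}"

definition part_size :: "(nat \<Rightarrow> nat) \<Rightarrow> nat" where
  "part_size lam = (\<Sum>i\<in>{i. 1 \<le> i \<and> lam i \<noteq> 0}. lam i)"

definition part_conj :: "(nat \<Rightarrow> nat) \<Rightarrow> nat \<Rightarrow> nat" where
  "part_conj lam j = (if j = 0 then 0 else card {i. 1 \<le> i \<and> j \<le> lam i})"

definition durfee :: "(nat \<Rightarrow> nat) \<Rightarrow> nat" where
  "durfee lam = card {i. 1 \<le> i \<and> i \<le> lam i}"

definition frob_alpha :: "(nat \<Rightarrow> nat) \<Rightarrow> nat \<Rightarrow> int" where
  "frob_alpha lam i = int (lam i) - int i"

definition frob_beta :: "(nat \<Rightarrow> nat) \<Rightarrow> nat \<Rightarrow> int" where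
  "frob_beta lam i = int (part_conj lam i) - int i"

definition Pset :: "nat \<Rightarrow> (nat \<Rightarrow> nat) set" where
  "Pset m = {lam. is_partition lam \<and> part_len lam \<le> m \<and>
       (\<forall>i\<in>{1..durfee lam}. frob_beta lam i = frob_alpha lam i + 1)}"

(* V^{p,q}_{lambda,mu}(x;a), rows/columns 0-indexed; row i uses x i, a i *)
definition Vmat :: "nat \<Rightarrow> nat \<Rightarrow> (nat \<Rightarrow> nat) \<Rightarrow> (nat \<Rightarrow> nat)
    \<Rightarrow> (nat \<Rightarrow> 'a::comm_ring_1) \<Rightarrow> (nat \<Rightarrow> 'a) \<Rightarrow> 'a mat" where
  "Vmat p q lam mu x a = mat (p + q) (p + q) (\<lambda>(i, j).
      if j < p then x i ^ (lam (p - j) + j)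
      else a i * x i ^ (mu (q - (j - p)) + (j - p)))"

definition V0mat :: "nat \<Rightarrow> nat \<Rightarrow> (nat \<Rightarrow> 'a::comm_ring_1) \<Rightarrow> (nat \<Rightarrow> 'a) \<Rightarrow> 'a mat" where
  "V0mat p q x a = Vmat p q (\<lambda>_. 0) (\<lambda>_. 0) x a"

definition Ffun :: "nat \<Rightarrow> nat \<Rightarrow> (nat \<Rightarrow> 'a::comm_ring_1) \<Rightarrow> (nat \<Rightarrow> 'a) \<Rightarrow> 'a" where
  "Ffun p q x a = (\<Sum>lam\<in>Pset p. \<Sum>mu\<in>Pset q.
      (-1) ^ ((part_size lam + part_size mu) div 2) * det (Vmat p q lam mu x a))"

definition Umat :: "nat \<Rightarrow> nat \<Rightarrow> (nat \<Rightarrow> 'a::comm_ring_1) \<Rightarrow> (nat \<Rightarrow> 'a) \<Rightarrow> 'a mat" where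
  "Umat p q x a = mat (p + q) (p + q) (\<lambda>(i, j).
      if j < p then x i ^ (p - 1 - j) * (1 + x i ^ 2) ^ j
      else a i * x i ^ (q - 1 - (j - p)) * (1 + x i ^ 2) ^ (j - p))"

end

theory Submission
  imports Defs
begin

(*
  Write s_j(y) = y^(p-1) (y^j + y^-j) for 0 < j < p and s_0(y) = y^(p-1).  Expanding a determinant
  whose first p columns are s_0(x_i), ..., s_(p-1)(x_i) by multilinearity gives the sum over lam in
  P_p of (-1)^(|lam|/2 + binom p 2) times the alternant with columns x_i^(lam_(p-j) + j).  This goes
  by induction on p: passing from p to p + 1 multiplies the old columns by x_i and appends the
  column 1 + x_i^(2p).  The summand 1, moved to the front, gives the partitions in P_(p+1) with at
  most p parts, and the summand x_i^(2p) gives the remaining ones, (p, mu_1 + 1, ..., mu_p + 1)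
  with mu in P_p.  Doing this for both column blocks of V turns F^(p,q) into
  (-1)^(binom p 2 + binom q 2) det W, where W has the columns s_j(x_i) and a_i s_j(x_i).
  Next, U = W T for a block unitriangular matrix T of binomial coefficients, since (x + 1/x)^j is
  a binomial combination of the x^m + x^-m.  Finally, pulling x_i^(p-1) out of row i of U gives
  V^(p,q)(x + 1/x; a x^(q-p)).
*)

section \<open>Partitions of the form (\<alpha> | \<alpha> + 1)\<close>

lemma partition_antimono:
  assumes "is_partition lam" "1 \<le> i" "i \<le> j"
  shows "lam j \<le> lam i"
  using assms(3,2)
proof (induction j rule: dec_induct)
  case (step j)
  then show ?case using assms(1) unfolding is_partition_def by (meson le_trans)
qed simp

lemma partition_rows_initial_segment:
  assumes lam: "is_partition lam" and "mono f" and f_pos: "\<And>k. 1 \<le> k \<Longrightarrow> 1 \<le> f k"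
  shows "1 \<le> k \<and> f k \<le> lam k \<longleftrightarrow> 1 \<le> k \<and> k \<le> card {k. 1 \<le> k \<and> f k \<le> lam k}"
proof -
  let ?S = "{k. 1 \<le> k \<and> f k \<le> lam k}"
  have "?S \<subseteq> {k. lam k \<noteq> 0}"
  proof
    fix k assume "k \<in> ?S"
    then show "k \<in> {k. lam k \<noteq> 0}" using f_pos[of k] by simp
  qed
  then have fin: "finite ?S" using lam unfolding is_partition_def by (auto intro: finite_subset)
  have down: "k' \<in> ?S" if "k \<in> ?S" "1 \<le> k'" "k' \<le> k" for k k'
    using that partition_antimono[OF lam, of k' k] monoD[OF \<open>mono f\<close>, of k' k] by auto
  obtain M where M: "?S = {1..M}"
  proof (cases "?S = {}")
    case True
    then show ?thesis using that[of 0] by simp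
  next
    case False
    have "?S = {1..Max ?S}"
    proof (intro equalityI subsetI)
      fix k assume "k \<in> ?S"
      then show "k \<in> {1..Max ?S}" using Max_ge[OF fin] by simp
    next
      fix k assume "k \<in> {1..Max ?S}"
      then show "k \<in> ?S" using down[OF Max_in[OF fin False]] by simp
    qed
    then show ?thesis by (rule that)
  qed
  from M have "k \<in> ?S \<longleftrightarrow> k \<in> {1..M}" by (rule arg_cong)
  moreover from M have "card ?S = M" by simp
  ultimately show ?thesis by simp
qed

lemma part_len_le_iff:
  assumes "is_partition lam"
  shows "part_len lam \<le> p \<longleftrightarrow> (\<forall>k>p. lam k = 0)"
proof -
  have len: "1 \<le> k \<and> 1 \<le> lam k \<longleftrightarrow> 1 \<le> k \<and> k \<le> part_len lam" for k
    using partition_rows_initial_segment[OF assms, of "\<lambda>_. 1" k]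
    by (simp add: part_len_def mono_def Suc_le_eq)
  show ?thesis
  proof (intro iffI allI impI)
    fix k assume "part_len lam \<le> p" "p < k"
    show "lam k = 0"
    proof (rule ccontr)
      assume "lam k \<noteq> 0"
      then have "k \<le> part_len lam" using len[of k] \<open>p < k\<close> by simp
      then show False using \<open>part_len lam \<le> p\<close> \<open>p < k\<close> by simp
    qed
  next
    assume zero: "\<forall>k>p. lam k = 0"
    show "part_len lam \<le> p"
    proof (rule ccontr)
      assume "\<not> part_len lam \<le> p"
      then have "1 \<le> lam (part_len lam)" using len[of "part_len lam"] by simp
      then show False using zero \<open>\<not> part_len lam \<le> p\<close> by simp
    qed
  qed
qed

lemma le_part_conj_iff:
  assumes "is_partition lam" "1 \<le> i" "1 \<le> k"
  shows "k \<le> part_conj lam i \<longleftrightarrow> i \<le> lam k"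
  using partition_rows_initial_segment[OF assms(1), of "\<lambda>_. i" k] assms(2,3)
  by (simp add: part_conj_def mono_def)

lemma le_durfee_iff:
  assumes "is_partition lam" "1 \<le> i"
  shows "i \<le> durfee lam \<longleftrightarrow> i \<le> lam i"
  using partition_rows_initial_segment[OF assms(1), of id i] assms(2)
  by (simp add: durfee_def mono_def)

(* Cell (i, j) with i <= j lies in the diagram iff cell (j + 1, i) does: this is the Frobenius
   form (alpha | alpha + 1) read off the diagram. *)
definition shifted_symmetric :: "(nat \<Rightarrow> nat) \<Rightarrow> bool" where
  "shifted_symmetric lam \<longleftrightarrow>
     (\<forall>i j. 1 \<le> i \<longrightarrow> i \<le> j \<longrightarrow> (j \<le> lam i \<longleftrightarrow> i \<le> lam (Suc j)))"

lemma shifted_symmetric_iff_conj: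
  assumes lam: "is_partition lam"
  shows "shifted_symmetric lam \<longleftrightarrow> (\<forall>i\<ge>1. i \<le> lam i \<longrightarrow> part_conj lam i = Suc (lam i))"
proof
  assume sym: "shifted_symmetric lam"
  show "\<forall>i\<ge>1. i \<le> lam i \<longrightarrow> part_conj lam i = Suc (lam i)"
  proof (intro allI impI)
    fix i assume i: "1 \<le> i" "i \<le> lam i"
    have "i \<le> lam (Suc (lam i))"
      using sym i unfolding shifted_symmetric_def by auto
    moreover have "\<not> i \<le> lam (Suc (Suc (lam i)))"
      using sym i unfolding shifted_symmetric_def by (metis Suc_n_not_le_n le_SucI)
    ultimately show "part_conj lam i = Suc (lam i)"
      using le_part_conj_iff[OF lam i(1), of "Suc (lam i)"]
        le_part_conj_iff[OF lam i(1), of "Suc (Suc (lam i))"]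
      by simp
  qed
next
  assume conj: "\<forall>i\<ge>1. i \<le> lam i \<longrightarrow> part_conj lam i = Suc (lam i)"
  show "shifted_symmetric lam"
    unfolding shifted_symmetric_def
  proof (intro allI impI)
    fix i j :: nat assume ij: "1 \<le> i" "i \<le> j"
    show "j \<le> lam i \<longleftrightarrow> i \<le> lam (Suc j)"
    proof (cases "i \<le> lam i")
      case True
      then show ?thesis using conj ij le_part_conj_iff[OF lam ij(1), of "Suc j"] by simp
    next
      case False
      moreover have "lam (Suc j) \<le> lam i" using partition_antimono[OF lam ij(1)] ij by simp
      ultimately show ?thesis using ij by simp
    qed
  qed
qed

lemma Pset_iff:
  "lam \<in> Pset p \<longleftrightarrow> is_partition lam \<and> (\<forall>k>p. lam k = 0) \<and> shifted_symmetric lam"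
proof (cases "is_partition lam")
  case True
  have "(\<forall>i\<in>{1..durfee lam}. frob_beta lam i = frob_alpha lam i + 1)
        \<longleftrightarrow> (\<forall>i\<ge>1. i \<le> lam i \<longrightarrow> part_conj lam i = Suc (lam i))"
  proof -
    have "i \<in> {1..durfee lam} \<longleftrightarrow> 1 \<le> i \<and> i \<le> lam i" for i
      using le_durfee_iff[OF True, of i] by auto
    moreover have "int a = int b + 1 \<longleftrightarrow> a = Suc b" for a b by auto
    ultimately show ?thesis by (simp add: Ball_def frob_alpha_def frob_beta_def) blast
  qed
  then show ?thesis
    using True by (simp add: Pset_def part_len_le_iff shifted_symmetric_iff_conj)
qed (simp add: Pset_def)

lemma Pset_parts_less:
  assumes mu: "mu \<in> Pset p" and "1 \<le> i" "1 \<le> p"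
  shows "mu i < p"
proof -
  have "\<not> p \<le> mu 1"
    using mu \<open>1 \<le> p\<close> unfolding Pset_iff shifted_symmetric_def
    by (metis le_refl lessI not_one_le_zero)
  moreover have "mu i \<le> mu 1" using mu \<open>1 \<le> i\<close> partition_antimono unfolding Pset_iff by blast
  ultimately show ?thesis by simp
qed

(* In Frobenius notation add_hook p (alpha | beta) = (p - 1, alpha | p, beta). *)
definition add_hook :: "nat \<Rightarrow> (nat \<Rightarrow> nat) \<Rightarrow> nat \<Rightarrow> nat" where
  "add_hook p mu i =
     (if i = 0 then 0 else if i = 1 then p else if i \<le> Suc p then Suc (mu (i - 1)) else 0)"

lemma add_hook_simps [simp]:
  "add_hook p mu 0 = 0"
  "add_hook p mu (Suc 0) = p"
  "add_hook p mu (Suc (Suc k)) = (if Suc k \<le> p then Suc (mu (Suc k)) else 0)"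
  by (simp_all add: add_hook_def)

lemma add_hook_in_Pset:
  assumes mu: "mu \<in> Pset p"
  shows "add_hook p mu \<in> Pset (Suc p)"
proof -
  have part: "is_partition mu" and zero: "\<forall>k>p. mu k = 0" and sym: "shifted_symmetric mu"
    using mu unfolding Pset_iff by auto
  have "add_hook p mu (Suc i) \<le> add_hook p mu i" if "1 \<le> i" for i
  proof -
    obtain k where i: "i = Suc k" using \<open>1 \<le> i\<close> by (cases i) auto
    show ?thesis
    proof (cases k)
      case 0
      then show ?thesis using i Pset_parts_less[OF mu, of 1] by auto
    next
      case (Suc k')
      then show ?thesis using i partition_antimono[OF part, of "Suc k'" "Suc (Suc k')"] by simp
    qed
  qed
  moreover have "finite {i. add_hook p mu i \<noteq> 0}"
    by (rule finite_subset[of _ "{..Suc p}"]) (auto simp: add_hook_def)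
  moreover have "add_hook p mu k = 0" if "Suc p < k" for k
    using that by (simp add: add_hook_def)
  moreover have "shifted_symmetric (add_hook p mu)"
    unfolding shifted_symmetric_def
  proof (intro allI impI)
    fix i j :: nat assume "1 \<le> i" "i \<le> j"
    then consider j' where "i = 1" "j = Suc j'"
      | i' j' where "i = Suc (Suc i')" "j = Suc (Suc j')" "i' \<le> j'"
      by (metis One_nat_def Suc_le_D Suc_le_mono not0_implies_Suc not_less_eq_eq)
    then show "j \<le> add_hook p mu i \<longleftrightarrow> i \<le> add_hook p mu (Suc j)"
    proof cases
      case 1
      then show ?thesis by simp
    next
      case 2
      then show ?thesis
        using sym[unfolded shifted_symmetric_def, rule_format, of "Suc i'" "Suc j'"]
          zero[rule_format, of "Suc (Suc j')"] Pset_parts_less[OF mu, of "Suc i'"]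
        by auto
    qed
  qed
  ultimately show ?thesis unfolding Pset_iff is_partition_def by simp
qed

lemma Pset_Suc_imp_add_hook:
  assumes lam: "lam \<in> Pset (Suc p)" and nonzero: "lam (Suc p) \<noteq> 0"
  shows "lam \<in> add_hook p ` Pset p"
proof -
  have part: "is_partition lam" and zero: "\<forall>k>Suc p. lam k = 0" and sym: "shifted_symmetric lam"
    using lam unfolding Pset_iff by auto
  note sym_at = sym[unfolded shifted_symmetric_def, rule_format]
  have pos: "1 \<le> lam k" if "1 \<le> k" "k \<le> Suc p" for k
    using partition_antimono[OF part that] nonzero by simp
  have "lam 1 \<le> p" using sym_at[of 1 "Suc p"] zero by auto
  then have "1 \<le> p" using pos[of 1] nonzero by auto
  then have first: "lam 1 = p" using sym_at[of 1 p] pos[of "Suc p"] \<open>lam 1 \<le> p\<close> by simp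
  define mu where "mu i = (if i = 0 then 0 else lam (Suc i) - 1)" for i
  have mu_zero: "mu k = 0" if "p < k" for k using zero that by (simp add: mu_def)
  have "lam = add_hook p mu"
  proof
    fix i
    consider "i = 0" | "i = 1" | k where "i = Suc (Suc k)"
      by (metis One_nat_def not0_implies_Suc)
    then show "lam i = add_hook p mu i"
    proof cases
      case 1
      then show ?thesis using part by (simp add: is_partition_def)
    next
      case 3
      then show ?thesis using pos[of i] zero by (auto simp: mu_def)
    qed (use first in simp)
  qed
  moreover have "mu \<in> Pset p"
    unfolding Pset_iff is_partition_def shifted_symmetric_def
  proof (intro conjI allI impI)
    show "mu (Suc i) \<le> mu i" if "1 \<le> i" for i
      using part that unfolding is_partition_def mu_def by (simp add: diff_le_mono)
    have "{i. mu i \<noteq> 0} \<subseteq> {..p}"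
    proof
      fix i assume "i \<in> {i. mu i \<noteq> 0}"
      then show "i \<in> {..p}" using mu_zero[of i] by (cases "p < i") auto
    qed
    then show "finite {i. mu i \<noteq> 0}" by (rule finite_subset) simp
    show "j \<le> mu i \<longleftrightarrow> i \<le> mu (Suc j)" if "1 \<le> i" "i \<le> j" for i j
      using sym_at[of "Suc i" "Suc j"] that by (auto simp: mu_def)
  qed (simp_all add: mu_def[of 0] mu_zero)
  ultimately show ?thesis by blast
qed

lemma Pset_Suc: "Pset (Suc p) = Pset p \<union> add_hook p ` Pset p"
proof (intro equalityI subsetI)
  fix lam assume lam: "lam \<in> Pset (Suc p)"
  show "lam \<in> Pset p \<union> add_hook p ` Pset p"
  proof (cases "lam (Suc p) = 0")
    case True
    then have "\<forall>k>p. lam k = 0" using lam unfolding Pset_iff by (metis Suc_lessI)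
    then have "lam \<in> Pset p" using lam unfolding Pset_iff by simp
    then show ?thesis by simp
  next
    case False
    then show ?thesis using Pset_Suc_imp_add_hook[OF lam] by simp
  qed
next
  fix lam assume "lam \<in> Pset p \<union> add_hook p ` Pset p"
  moreover have "Pset p \<subseteq> Pset (Suc p)" by (auto simp: Pset_iff)
  ultimately show "lam \<in> Pset (Suc p)" using add_hook_in_Pset by blast
qed

lemma Pset_0: "Pset 0 = {\<lambda>_. 0}"
proof -
  have "lam = (\<lambda>_. 0)" if "lam \<in> Pset 0" for lam
  proof
    fix i show "lam i = 0" using that unfolding Pset_iff is_partition_def by (cases i) auto
  qed
  moreover have "(\<lambda>_. 0) \<in> Pset 0" unfolding Pset_iff is_partition_def shifted_symmetric_def by simp
  ultimately show ?thesis by blast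
qed

lemma finite_Pset: "finite (Pset p)"
  by (induction p) (simp_all add: Pset_0 Pset_Suc)

lemma Pset_Int_add_hook_image:
  assumes "1 \<le> p"
  shows "Pset p \<inter> add_hook p ` Pset p = {}"
proof -
  have "add_hook p mu (Suc p) \<noteq> 0" for mu using assms by (simp add: add_hook_def)
  moreover have "lam (Suc p) = 0" if "lam \<in> Pset p" for lam using that unfolding Pset_iff by simp
  ultimately show ?thesis by blast
qed

lemma inj_on_add_hook: "inj_on (add_hook p) (Pset p)"
proof
  fix mu mu' assume mu: "mu \<in> Pset p" "mu' \<in> Pset p" and eq: "add_hook p mu = add_hook p mu'"
  show "mu = mu'"
  proof
    fix i
    show "mu i = mu' i"
    proof (cases "1 \<le> i \<and> i \<le> p")
      case True
      then show ?thesis using fun_cong[OF eq, of "Suc i"] by (simp add: add_hook_def)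
    next
      case False
      then show ?thesis using mu unfolding Pset_iff is_partition_def by (cases i) auto
    qed
  qed
qed

lemma part_size_eq_sum:
  assumes "\<forall>k>p. lam k = 0"
  shows "part_size lam = (\<Sum>i=1..p. lam i)"
  unfolding part_size_def
proof (rule sum.mono_neutral_left)
  show "{i. 1 \<le> i \<and> lam i \<noteq> 0} \<subseteq> {1..p}"
  proof
    fix i assume "i \<in> {i. 1 \<le> i \<and> lam i \<noteq> 0}"
    then show "i \<in> {1..p}" using assms by (cases "p < i") auto
  qed
qed auto

lemma sum_atLeast1_Suc_shift:
  fixes f :: "nat \<Rightarrow> 'a::comm_monoid_add"
  shows "(\<Sum>i=1..Suc n. f i) = f 1 + (\<Sum>i=1..n. f (Suc i))"
  by (induction n) (simp_all add: add.assoc)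

lemma part_size_add_hook:
  assumes mu: "mu \<in> Pset p"
  shows "part_size (add_hook p mu) = part_size mu + 2 * p"
proof -
  have "part_size (add_hook p mu) = (\<Sum>i=1..Suc p. add_hook p mu i)"
    by (rule part_size_eq_sum) (simp add: add_hook_def)
  also have "\<dots> = add_hook p mu 1 + (\<Sum>i=1..p. add_hook p mu (Suc i))"
    by (rule sum_atLeast1_Suc_shift)
  also have "(\<Sum>i=1..p. add_hook p mu (Suc i)) = (\<Sum>i=1..p. mu i + 1)"
    by (rule sum.cong) (auto simp: add_hook_def)
  also have "\<dots> = (\<Sum>i=1..p. mu i) + p"
    by (simp only: sum.distrib) simp
  also have "(\<Sum>i=1..p. mu i) = part_size mu"
    using mu part_size_eq_sum unfolding Pset_iff by metis
  finally show ?thesis by simp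
qed

lemma even_part_size: "lam \<in> Pset p \<Longrightarrow> even (part_size lam)"
proof (induction p arbitrary: lam)
  case 0
  then show ?case by (simp add: Pset_0 part_size_def)
next
  case (Suc p)
  then show ?case unfolding Pset_Suc by (auto simp: part_size_add_hook)
qed

section \<open>Column operations on determinants\<close>

lemma det_col_add:
  assumes "c < n"
  shows "det (mat n n (\<lambda>(i, j). if j = c then A i + B i else M i j)) =
         det (mat n n (\<lambda>(i, j). if j = c then A i else M i j)) +
         det (mat n n (\<lambda>(i, j). if j = c then B i else M i j))"
proof -
  let ?R = "\<lambda>v j. if j = c then v else vec n (\<lambda>i. M i j)"
  have col: "mat n n (\<lambda>(i, j). if j = c then f i else M i j) =
      transpose_mat (mat\<^sub>r n n (?R (vec n f)))"
    for f by (rule eq_matI) auto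
  have "mat n n (\<lambda>(i, j). if j = c then A i + B i else M i j) =
      transpose_mat (mat\<^sub>r n n (\<lambda>j. if j = c then vec n A + vec n B else vec n (\<lambda>i. M i j)))"
    by (rule eq_matI) auto
  then show ?thesis
    unfolding col det_transpose[OF mat_row_carrierI]
    using det_row_add[of "\<lambda>_. vec n A" c n "\<lambda>_. vec n B" "\<lambda>j. vec n (\<lambda>i. M i j)"] assms
    by auto
qed

lemma det_scale_rows:
  "det (mat n n (\<lambda>(i, j). d i * M i j)) = (\<Prod>i<n. d i) * det (mat n n (\<lambda>(i, j). M i j))"
proof -
  have "mat n n (\<lambda>(i, j). d i * M i j) = mat\<^sub>r n n (\<lambda>i. d i \<cdot>\<^sub>v vec n (M i))"
    by (rule eq_matI) auto
  moreover have "mat n n (\<lambda>(i, j). M i j) = mat\<^sub>r n n (\<lambda>i. vec n (M i))"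
    by (rule eq_matI) auto
  ultimately show ?thesis
    using det_rows_mul[of "\<lambda>i. vec n (M i)" n d] by (simp add: atLeast0LessThan)
qed

lemma det_move_col_to_front:
  assumes "p < n"
  shows "det (mat n n (\<lambda>(i, j). if j < p then A i j else if j = p then B i else C i j)) =
    (-1) ^ p * det (mat n n (\<lambda>(i, j). if j = 0 then B i else if j \<le> p then A i (j - 1) else C i j))"
proof -
  let ?M = "mat n n (\<lambda>(i, j). if j < p then A i j else if j = p then B i else C i j)"
  have "det ?M = (-1) ^ (p * 1) *
      det (mat n n (\<lambda>(i, j). ?M $$ (i, if j < 1 then j + p else if j < p + 1 then j - 1 else j)))"
    by (rule det_swap_initial_cols) (use assms in auto)
  also have "mat n n (\<lambda>(i, j). ?M $$ (i, if j < 1 then j + p else if j < p + 1 then j - 1 else j)) =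
      mat n n (\<lambda>(i, j). if j = 0 then B i else if j \<le> p then A i (j - 1) else C i j)"
    by (rule eq_matI) (use assms in auto)
  finally show ?thesis by simp
qed

lemma det_swap_col_blocks:
  "det (mat (p + q) (p + q) (\<lambda>(i, j). if j < p then A i j else B i (j - p))) =
   (-1) ^ (p * q) * det (mat (p + q) (p + q) (\<lambda>(i, j). if j < q then B i j else A i (j - q)))"
proof -
  let ?M = "mat (q + p) (q + p) (\<lambda>(i, j). if j < p then A i j else B i (j - p))"
  have "det ?M = (-1) ^ (q * p) *
      det (mat (q + p) (q + p) (\<lambda>(i, j). ?M $$ (i, if j < q then j + p else j - q)))"
    by (rule det_swap_cols) simp
  also have "mat (q + p) (q + p) (\<lambda>(i, j). ?M $$ (i, if j < q then j + p else j - q)) =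
      mat (q + p) (q + p) (\<lambda>(i, j). if j < q then B i j else A i (j - q))"
    by (rule eq_matI) auto
  finally show ?thesis by (simp add: add.commute mult.commute)
qed

section \<open>Expanding a block of columns y^(p-1) (y^j + y^-j)\<close>

(* sympow p j y = y^(p-1) (y^j + y^-j), with the two terms merged for j = 0. *)
definition sympow :: "nat \<Rightarrow> nat \<Rightarrow> 'a::comm_ring_1 \<Rightarrow> 'a" where
  "sympow p j y = (if j = 0 then y ^ (p - 1) else y ^ (p - 1 - j) + y ^ (p - 1 + j))"

definition alternant_mat :: "nat \<Rightarrow> nat \<Rightarrow> (nat \<Rightarrow> 'a::comm_ring_1) \<Rightarrow> (nat \<Rightarrow> nat \<Rightarrow> 'a)
    \<Rightarrow> (nat \<Rightarrow> 'a) \<Rightarrow> (nat \<Rightarrow> nat) \<Rightarrow> 'a mat" where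
  "alternant_mat n p r C x lam =
     mat n n (\<lambda>(i, j). if j < p then r i * x i ^ (lam (p - j) + j) else C i (j - p))"

definition sympow_mat :: "nat \<Rightarrow> nat \<Rightarrow> (nat \<Rightarrow> 'a::comm_ring_1) \<Rightarrow> (nat \<Rightarrow> nat \<Rightarrow> 'a)
    \<Rightarrow> (nat \<Rightarrow> 'a) \<Rightarrow> 'a mat" where
  "sympow_mat n p r C x =
     mat n n (\<lambda>(i, j). if j < p then r i * sympow p j (x i) else C i (j - p))"

definition cons_col :: "(nat \<Rightarrow> 'a) \<Rightarrow> (nat \<Rightarrow> nat \<Rightarrow> 'a) \<Rightarrow> nat \<Rightarrow> nat \<Rightarrow> 'a" where
  "cons_col v C i j = (if j = 0 then v i else C i (j - 1))"

lemma sympow_Suc: "j < p \<Longrightarrow> sympow (Suc p) j y = y * sympow p j y"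
  by (auto simp: sympow_def distrib_left power_Suc[symmetric] Suc_diff_Suc simp del: power_Suc)

lemma sympow_Suc_last: "1 \<le> p \<Longrightarrow> sympow (Suc p) p y = 1 + y ^ (2 * p)"
  by (simp add: sympow_def mult_2)

lemma det_sympow_mat_Suc:
  fixes r x :: "nat \<Rightarrow> 'a::comm_ring_1"
  assumes "1 \<le> p" "p < n"
  shows "det (sympow_mat n (Suc p) r C x) =
    det (sympow_mat n p (\<lambda>i. r i * x i) (cons_col r C) x) +
    det (sympow_mat n p (\<lambda>i. r i * x i) (cons_col (\<lambda>i. r i * x i ^ (2 * p)) C) x)"
proof -
  define M where "M i j = (if j < p then r i * x i * sympow p j (x i) else C i (j - Suc p))" for i j
  have "sympow_mat n (Suc p) r C x =
      mat n n (\<lambda>(i, j). if j = p then r i + r i * x i ^ (2 * p) else M i j)"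
    by (rule eq_matI) (auto simp: sympow_mat_def M_def sympow_Suc sympow_Suc_last[OF assms(1)]
        distrib_left mult.assoc)
  moreover have "sympow_mat n p (\<lambda>i. r i * x i) (cons_col v C) x =
      mat n n (\<lambda>(i, j). if j = p then v i else M i j)" for v
    by (rule eq_matI) (auto simp: sympow_mat_def cons_col_def M_def)
  ultimately show ?thesis using det_col_add[OF \<open>p < n\<close>] by simp
qed

lemma det_alternant_mat_Suc:
  fixes r x :: "nat \<Rightarrow> 'a::comm_ring_1"
  assumes "p < n" "lam (Suc p) = 0"
  shows "det (alternant_mat n (Suc p) r C x lam) =
    (-1) ^ p * det (alternant_mat n p (\<lambda>i. r i * x i) (cons_col r C) x lam)"
proof -
  let ?A = "\<lambda>i j. r i * x i * x i ^ (lam (p - j) + j)"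
  let ?C = "\<lambda>i j. C i (j - Suc p)"
  have "alternant_mat n p (\<lambda>i. r i * x i) (cons_col r C) x lam =
      mat n n (\<lambda>(i, j). if j < p then ?A i j else if j = p then r i else ?C i j)"
    by (rule eq_matI) (auto simp: alternant_mat_def cons_col_def)
  moreover have "mat n n (\<lambda>(i, j). if j = 0 then r i else if j \<le> p then ?A i (j - 1) else ?C i j) =
      alternant_mat n (Suc p) r C x lam" (is "?L = ?R")
  proof (rule eq_matI)
    fix i j assume "i < dim_row ?R" "j < dim_col ?R"
    then have "i < n" "j < n" by (auto simp: alternant_mat_def)
    moreover have "?A i (j - 1) = r i * x i ^ (lam (Suc p - j) + j)" if "1 \<le> j" "j \<le> p"
      using that by (simp add: Suc_diff_le power_Suc[symmetric] mult.assoc del: power_Suc)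
    ultimately show "?L $$ (i, j) = ?R $$ (i, j)"
      using assms(2) by (auto simp: alternant_mat_def)
  qed (auto simp: alternant_mat_def)
  ultimately show ?thesis using det_move_col_to_front[OF \<open>p < n\<close>, of ?A r ?C] by simp
qed

lemma alternant_mat_add_hook:
  fixes r x :: "nat \<Rightarrow> 'a::comm_ring_1"
  shows "alternant_mat n (Suc p) r C x (add_hook p lam) =
    alternant_mat n p (\<lambda>i. r i * x i) (cons_col (\<lambda>i. r i * x i ^ (2 * p)) C) x lam"
    (is "?L = ?R")
proof (rule eq_matI)
  fix i j assume "i < dim_row ?R" "j < dim_col ?R"
  then have "i < n" "j < n" by (auto simp: alternant_mat_def)
  moreover have "add_hook p lam (Suc p - j) = Suc (lam (p - j))" if "j < p"
    using that by (simp add: add_hook_def Suc_diff_le)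
  ultimately show "?L $$ (i, j) = ?R $$ (i, j)"
    by (auto simp: alternant_mat_def cons_col_def add_hook_def mult_2 mult.assoc)
qed (auto simp: alternant_mat_def)

lemma sum_Pset_det_alternant_mat:
  fixes r x :: "nat \<Rightarrow> 'a::comm_ring_1"
  assumes "p \<le> n"
  shows "(\<Sum>lam\<in>Pset p. (-1) ^ (part_size lam div 2) * det (alternant_mat n p r C x lam)) =
    (-1) ^ (p choose 2) * det (sympow_mat n p r C x)"
  using assms
proof (induction p arbitrary: r C)
  case 0
  have "alternant_mat n 0 r C x (\<lambda>_. 0) = sympow_mat n 0 r C x"
    by (simp add: alternant_mat_def sympow_mat_def)
  then show ?case by (simp add: Pset_0 part_size_def binomial_eq_0)
next
  case (Suc p)
  show ?case
  proof (cases "p = 0")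
    case True
    have "Pset 1 = {\<lambda>_. 0}" using Pset_Suc[of 0] by (auto simp: Pset_0 add_hook_def)
    moreover have "alternant_mat n 1 r C x (\<lambda>_. 0) = sympow_mat n 1 r C x"
      by (rule eq_matI) (auto simp: alternant_mat_def sympow_mat_def sympow_def)
    ultimately show ?thesis using True by (simp add: part_size_def binomial_eq_0)
  next
    case False
    then have "1 \<le> p" "p < n" using Suc.prems by auto
    define r' where "r' = (\<lambda>i. r i * x i)"
    define C1 where "C1 = cons_col r C"
    define C2 where "C2 = cons_col (\<lambda>i. r i * x i ^ (2 * p)) C"
    define s where "s lam = ((-1) ^ (part_size lam div 2) :: 'a)" for lam
    let ?D = "alternant_mat n (Suc p) r C x"
    have "(\<Sum>lam\<in>Pset (Suc p). s lam * det (?D lam)) =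
        (\<Sum>lam\<in>Pset p. s lam * det (?D lam)) +
        (\<Sum>lam\<in>Pset p. s (add_hook p lam) * det (?D (add_hook p lam)))"
      unfolding Pset_Suc using finite_Pset Pset_Int_add_hook_image[OF \<open>1 \<le> p\<close>]
      by (simp add: sum.union_disjoint sum.reindex[OF inj_on_add_hook])
    also have "\<dots> = (-1) ^ p * (\<Sum>lam\<in>Pset p. s lam * det (alternant_mat n p r' C1 x lam)) +
        (-1) ^ p * (\<Sum>lam\<in>Pset p. s lam * det (alternant_mat n p r' C2 x lam))"
      unfolding sum_distrib_left
    proof (intro arg_cong2[where f = "(+)"] sum.cong refl)
      fix lam assume lam: "lam \<in> Pset p"
      then have last: "lam (Suc p) = 0" by (simp add: Pset_iff)
      show "s lam * det (?D lam) = (-1) ^ p * (s lam * det (alternant_mat n p r' C1 x lam))"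
        unfolding r'_def C1_def det_alternant_mat_Suc[where lam = lam, OF \<open>p < n\<close> last]
        by (simp add: ac_simps)
      have "s (add_hook p lam) = (-1) ^ p * s lam"
        using part_size_add_hook[OF lam] by (simp add: s_def power_add)
      then show "s (add_hook p lam) * det (?D (add_hook p lam)) =
          (-1) ^ p * (s lam * det (alternant_mat n p r' C2 x lam))"
        unfolding r'_def C2_def alternant_mat_add_hook by (simp add: ac_simps)
    qed
    also have "\<dots> = (-1) ^ p * (-1) ^ (p choose 2) *
        (det (sympow_mat n p r' C1 x) + det (sympow_mat n p r' C2 x))"
      using Suc.IH \<open>p < n\<close> by (simp add: s_def algebra_simps)
    also have "\<dots> = (-1) ^ (Suc p choose 2) * det (sympow_mat n (Suc p) r C x)"
    proof -
      have "Suc p choose 2 = (p choose 2) + p" by (simp add: numeral_2_eq_2)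
      then show ?thesis
        unfolding det_sympow_mat_Suc[OF \<open>1 \<le> p\<close> \<open>p < n\<close>] r'_def C1_def C2_def
        by (simp add: power_add)
    qed
    finally show ?thesis by (simp add: s_def)
  qed
qed

definition Wmat :: "nat \<Rightarrow> nat \<Rightarrow> (nat \<Rightarrow> 'a::comm_ring_1) \<Rightarrow> (nat \<Rightarrow> 'a) \<Rightarrow> 'a mat" where
  "Wmat p q x a = sympow_mat (p + q) p (\<lambda>_. 1) (\<lambda>i j. a i * sympow q j (x i)) x"

lemma Ffun_eq_det_Wmat:
  fixes x a :: "nat \<Rightarrow> 'a::comm_ring_1"
  shows "Ffun p q x a = (-1) ^ ((p choose 2) + (q choose 2)) * det (Wmat p q x a)"
proof -
  define n where "n = p + q"
  define s where "s lam = ((-1) ^ (part_size lam div 2) :: 'a)" for lam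
  define A where "A mu = (\<lambda>i j. a i * x i ^ (mu (q - j) + j))" for mu
  define S where "S = (\<lambda>i j. sympow p j (x i))"
  have V: "Vmat p q lam mu x a = alternant_mat n p (\<lambda>_. 1) (A mu) x lam" for lam mu
    unfolding Vmat_def alternant_mat_def A_def n_def by (rule eq_matI) auto
  have swap_first: "det (sympow_mat n p (\<lambda>_. 1) (A mu) x) =
      (-1) ^ (p * q) * det (alternant_mat n q a S x mu)" for mu
  proof -
    have "sympow_mat n p (\<lambda>_. 1) (A mu) x =
        mat n n (\<lambda>(i, j). if j < p then S i j else A mu i (j - p))"
      by (rule eq_matI) (auto simp: sympow_mat_def S_def)
    moreover have "alternant_mat n q a S x mu =
        mat n n (\<lambda>(i, j). if j < q then A mu i j else S i (j - q))"
      by (rule eq_matI) (auto simp: alternant_mat_def A_def)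
    ultimately show ?thesis using det_swap_col_blocks[of p q S "A mu"] by (simp add: n_def)
  qed
  have swap_second: "det (sympow_mat n q a S x) = (-1) ^ (p * q) * det (Wmat p q x a)"
  proof -
    have "Wmat p q x a = mat n n (\<lambda>(i, j). if j < p then S i j else a i * sympow q (j - p) (x i))"
      by (rule eq_matI) (auto simp: Wmat_def sympow_mat_def S_def n_def)
    moreover have "sympow_mat n q a S x =
        mat n n (\<lambda>(i, j). if j < q then a i * sympow q j (x i) else S i (j - q))"
      by (rule eq_matI) (auto simp: sympow_mat_def)
    ultimately show ?thesis
      using det_swap_col_blocks[of p q S "\<lambda>i j. a i * sympow q j (x i)"] by (simp add: n_def)
  qed
  have "Ffun p q x a =
      (\<Sum>mu\<in>Pset q. s mu * (\<Sum>lam\<in>Pset p. s lam * det (alternant_mat n p (\<lambda>_. 1) (A mu) x lam)))"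
  proof -
    have sign: "(-1) ^ ((part_size lam + part_size mu) div 2) = s mu * s lam" if "lam \<in> Pset p"
      for lam mu
      using even_part_size[OF that] by (simp add: s_def div_plus_div_distrib_dvd_left power_add)
    show ?thesis
      unfolding Ffun_def V sum_distrib_left
      by (subst sum.swap) (auto intro!: sum.cong simp: sign mult.assoc)
  qed
  also have "\<dots> = (-1) ^ (p choose 2) * (-1) ^ (p * q) *
      (\<Sum>mu\<in>Pset q. s mu * det (alternant_mat n q a S x mu))"
    unfolding s_def sum_Pset_det_alternant_mat[OF le_add1[of p q, folded n_def]] swap_first
      sum_distrib_left
    by (simp add: ac_simps)
  also have "\<dots> = (-1) ^ (p choose 2) * (-1) ^ (q choose 2) * det (Wmat p q x a)"
    unfolding s_def sum_Pset_det_alternant_mat[OF le_add2[of q p, folded n_def]] swap_second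
    by (simp add: ac_simps)
  finally show ?thesis by (simp add: power_add)
qed

section \<open>The matrices U and V\<close>

(* (y + 1/y)^j is the sum of sympow_coeff m j (y^m + y^-m), the term m = 0 counted once. *)
definition sympow_coeff :: "nat \<Rightarrow> nat \<Rightarrow> 'a::comm_ring_1" where
  "sympow_coeff m j = (if m \<le> j \<and> even (j - m) then of_nat (j choose ((j - m) div 2)) else 0)"

lemma power_one_plus_square_eq_sum_sympow:
  fixes y :: "'a::comm_ring_1"
  assumes "j < p"
  shows "y ^ (p - 1 - j) * (1 + y\<^sup>2) ^ j =
    (\<Sum>k | 2 * k \<le> j. of_nat (j choose k) * sympow p (j - 2 * k) y)"
proof -
  define t where "t k = of_nat (j choose k) * y ^ (p - 1 - j + 2 * k)" for k
  have fin: "finite {k. 2 * k \<le> j}" by (rule finite_subset[of _ "{..j}"]) auto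
  have "y ^ (p - 1 - j) * (1 + y\<^sup>2) ^ j = (\<Sum>k\<le>j. t k)"
    unfolding t_def add.commute[of 1] binomial_ring
    by (simp add: sum_distrib_left power_add ac_simps flip: power_mult)
  also have "\<dots> = (\<Sum>k | 2 * k \<le> j. t k) + (\<Sum>k | j < 2 * k \<and> k \<le> j. t k)"
  proof -
    have "{..j} = {k. 2 * k \<le> j} \<union> {k. j < 2 * k \<and> k \<le> j}" by auto
    moreover note fin
    moreover have "finite {k. j < 2 * k \<and> k \<le> j}" by (rule finite_subset[of _ "{..j}"]) auto
    moreover have "{k. 2 * k \<le> j} \<inter> {k. j < 2 * k \<and> k \<le> j} = {}" by auto
    ultimately show ?thesis by (simp add: sum.union_disjoint)
  qed
  also have "(\<Sum>k | j < 2 * k \<and> k \<le> j. t k) = (\<Sum>k | 2 * k < j. t (j - k))"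
    by (rule sum.reindex_bij_witness[where i = "\<lambda>k. j - k" and j = "\<lambda>k. j - k"]) auto
  also have "\<dots> = (\<Sum>k | 2 * k \<le> j. if 2 * k < j then t (j - k) else 0)"
    by (rule sum.mono_neutral_cong_left) (use fin in auto)
  also have "(\<Sum>k | 2 * k \<le> j. t k) + \<dots> =
      (\<Sum>k | 2 * k \<le> j. of_nat (j choose k) * sympow p (j - 2 * k) y)"
    unfolding sum.distrib[symmetric]
  proof (rule sum.cong)
    fix k assume "k \<in> {k. 2 * k \<le> j}"
    then consider "2 * k = j" | "2 * k < j" by fastforce
    then show "t k + (if 2 * k < j then t (j - k) else 0) =
        of_nat (j choose k) * sympow p (j - 2 * k) y"
    proof cases
      case 1
      then show ?thesis using assms by (auto simp: t_def sympow_def)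
    next
      case 2
      then have "p - 1 - j + 2 * k = p - 1 - (j - 2 * k)"
          "p - 1 - j + 2 * (j - k) = p - 1 + (j - 2 * k)"
          "j choose (j - k) = j choose k"
        using assms by (simp_all add: binomial_symmetric[symmetric])
      then show ?thesis using 2 unfolding t_def sympow_def by (simp add: distrib_left)
    qed
  qed simp
  finally show ?thesis .
qed

lemma sum_sympow_mult_coeff:
  fixes y :: "'a::comm_ring_1"
  assumes "j < p"
  shows "(\<Sum>m<p. sympow p m y * sympow_coeff m j) = y ^ (p - 1 - j) * (1 + y\<^sup>2) ^ j"
proof -
  let ?M = "{m. m \<le> j \<and> even (j - m)}"
  have "(\<Sum>m<p. sympow p m y * sympow_coeff m j) =
      (\<Sum>m\<in>?M. of_nat (j choose ((j - m) div 2)) * sympow p m y)"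
    using assms by (intro sum.mono_neutral_cong_right) (auto simp: sympow_coeff_def)
  also have "\<dots> = (\<Sum>k | 2 * k \<le> j. of_nat (j choose k) * sympow p (j - 2 * k) y)"
    by (rule sum.reindex_bij_witness[where i = "\<lambda>k. j - 2 * k" and j = "\<lambda>m. (j - m) div 2"])
      (auto elim!: evenE)
  finally show ?thesis using power_one_plus_square_eq_sum_sympow[OF assms, of y] by simp
qed

definition sympow_coeff_mat :: "nat \<Rightarrow> nat \<Rightarrow> 'a::comm_ring_1 mat" where
  "sympow_coeff_mat p q = mat (p + q) (p + q) (\<lambda>(m, j).
     if j < p then (if m < p then sympow_coeff m j else 0)
     else if m < p then 0 else sympow_coeff (m - p) (j - p))"

lemma det_sympow_coeff_mat: "det (sympow_coeff_mat p q) = 1"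
proof -
  have "upper_triangular (sympow_coeff_mat p q)"
    unfolding upper_triangular_def sympow_coeff_mat_def by (auto simp: sympow_coeff_def)
  then have "det (sympow_coeff_mat p q) = prod_list (diag_mat (sympow_coeff_mat p q))"
    by (rule det_upper_triangular[of _ "p + q"]) (simp add: sympow_coeff_mat_def)
  also have "diag_mat (sympow_coeff_mat p q) = map (\<lambda>_. 1) [0..<p + q]"
    unfolding diag_mat_def sympow_coeff_mat_def by (auto simp: sympow_coeff_def)
  finally show ?thesis by (simp add: map_replicate_const)
qed

lemma sum_lessThan_add:
  fixes f :: "nat \<Rightarrow> 'a::comm_monoid_add"
  shows "(\<Sum>m<p + q. f m) = (\<Sum>m<p. f m) + (\<Sum>m<q. f (p + m))"
  by (induction q) (simp_all add: add.assoc)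

lemma Umat_eq_Wmat_mult: "Umat p q x a = Wmat p q x a * sympow_coeff_mat p q"
  (is "_ = ?W * ?T")
proof (rule eq_matI)
  fix i j assume "i < dim_row (?W * ?T)" "j < dim_col (?W * ?T)"
  then have ij: "i < p + q" "j < p + q" by (auto simp: Wmat_def sympow_mat_def sympow_coeff_mat_def)
  have "(?W * ?T) $$ (i, j) = (\<Sum>m<p + q. ?W $$ (i, m) * ?T $$ (m, j))"
    using ij
    by (simp add: Wmat_def sympow_mat_def sympow_coeff_mat_def scalar_prod_def atLeast0LessThan)
  also have "\<dots> = Umat p q x a $$ (i, j)"
  proof (cases "j < p")
    case True
    then show ?thesis
      using ij sum_sympow_mult_coeff[OF True, of "x i"]
      by (simp add: sum_lessThan_add Wmat_def sympow_mat_def sympow_coeff_mat_def Umat_def)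
  next
    case False
    then have "j - p < q" using ij by simp
    then show ?thesis
      using ij False sum_sympow_mult_coeff[OF \<open>j - p < q\<close>, of "x i"]
      by (simp add: sum_lessThan_add Wmat_def sympow_mat_def sympow_coeff_mat_def Umat_def
          mult.assoc flip: sum_distrib_left)
  qed
  finally show "Umat p q x a $$ (i, j) = (?W * ?T) $$ (i, j)" ..
qed (auto simp: Umat_def Wmat_def sympow_mat_def sympow_coeff_mat_def)

lemma det_Umat_eq_det_Wmat: "det (Umat p q x a) = det (Wmat p q x a)"
proof -
  have "det (Wmat p q x a * sympow_coeff_mat p q) = det (Wmat p q x a) * det (sympow_coeff_mat p q)"
    by (rule det_mult[of _ "p + q"]) (auto simp: Wmat_def sympow_mat_def sympow_coeff_mat_def)
  then show ?thesis by (simp add: Umat_eq_Wmat_mult det_sympow_coeff_mat)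
qed

lemma Ffun_eq_det_Umat: "Ffun p q x a = (-1) ^ ((p choose 2) + (q choose 2)) * det (Umat p q x a)"
  by (simp add: Ffun_eq_det_Wmat det_Umat_eq_det_Wmat)

lemma powi_mult_power_plus_inverse:
  fixes y :: "'a::field"
  assumes "y \<noteq> 0" "j < m"
  shows "y powi (int m - 1) * (y + inverse y) ^ j = y ^ (m - 1 - j) * (1 + y\<^sup>2) ^ j"
proof -
  have "int m - 1 = int (m - 1)" using assms(2) by linarith
  then have "y powi (int m - 1) = y ^ (m - 1)" by (simp only: power_int_of_nat)
  also have "\<dots> = y ^ (m - 1 - j) * y ^ j" using assms(2) by (simp flip: power_add)
  finally have "y powi (int m - 1) = y ^ (m - 1 - j) * y ^ j" .
  moreover have "y * (y + inverse y) = 1 + y\<^sup>2"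
    using assms(1) by (simp add: distrib_left power2_eq_square)
  ultimately show ?thesis by (simp add: mult.assoc flip: power_mult_distrib)
qed

lemma det_Umat_eq_det_V0mat:
  fixes x a :: "nat \<Rightarrow> 'a::field"
  assumes x: "\<forall>i < p + q. x i \<noteq> 0"
  shows "det (Umat p q x a) = (\<Prod>i<p + q. x i powi (int p - 1)) *
    det (V0mat p q (\<lambda>i. x i + inverse (x i)) (\<lambda>i. a i * x i powi (int q - int p)))"
proof -
  define M where "M i j = (if j < p then (x i + inverse (x i)) ^ j
      else a i * x i powi (int q - int p) * (x i + inverse (x i)) ^ (j - p))" for i j
  have "V0mat p q (\<lambda>i. x i + inverse (x i)) (\<lambda>i. a i * x i powi (int q - int p)) =
      mat (p + q) (p + q) (\<lambda>(i, j). M i j)"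
    unfolding V0mat_def Vmat_def M_def by (rule eq_matI) auto
  moreover have "Umat p q x a = mat (p + q) (p + q) (\<lambda>(i, j). x i powi (int p - 1) * M i j)"
    (is "_ = ?R")
  proof (rule eq_matI)
    fix i j assume "i < dim_row ?R" "j < dim_col ?R"
    then have ij: "i < p + q" "j < p + q" by auto
    with x have xi: "x i \<noteq> 0" by simp
    show "Umat p q x a $$ (i, j) = ?R $$ (i, j)"
    proof (cases "j < p")
      case True
      then show ?thesis using ij by (simp add: Umat_def M_def powi_mult_power_plus_inverse[OF xi])
    next
      case False
      then have "j - p < q" using ij by simp
      have "x i powi (int p - 1) * x i powi (int q - int p) = x i powi (int q - 1)"
        using xi by (simp add: power_int_add[symmetric])
      then have "x i powi (int p - 1) * M i j =
          a i * (x i powi (int q - 1) * (x i + inverse (x i)) ^ (j - p))"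
        unfolding M_def using False by (simp add: ac_simps)
      also have "\<dots> = a i * (x i ^ (q - 1 - (j - p)) * (1 + (x i)\<^sup>2) ^ (j - p))"
        by (simp add: powi_mult_power_plus_inverse[OF xi \<open>j - p < q\<close>])
      finally show ?thesis using ij False by (simp add: Umat_def mult.assoc)
    qed
  qed (auto simp: Umat_def)
  ultimately show ?thesis by (simp add: det_scale_rows)
qed

theorem mainTheorem5:
  fixes p q :: nat and x a :: "nat \<Rightarrow> 'a::field"
  assumes "\<forall>i < p + q. x i \<noteq> 0"
  shows "Ffun p q x a =
           (-1) ^ ((p choose 2) + (q choose 2)) * (\<Prod>i<p + q. x i powi (int p - 1)) *
           det (V0mat p q (\<lambda>i. x i + inverse (x i)) (\<lambda>i. a i * x i powi (int q - int p)))
       \<and> (-1) ^ ((p choose 2) + (q choose 2)) * (\<Prod>i<p + q. x i powi (int p - 1)) *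
           det (V0mat p q (\<lambda>i. x i + inverse (x i)) (\<lambda>i. a i * x i powi (int q - int p)))
         = (-1) ^ ((p choose 2) + (q choose 2)) * det (Umat p q x a)"
  by (simp add: Ffun_eq_det_Umat det_Umat_eq_det_V0mat[OF assms] mult.assoc)

end
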